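(* Let $G$ be a finite simple graph. The following are equivalent: (i) $G$ is a König–Egerváry graph; (ii) $\operatorname{diadem}(G) = \operatorname{corona}(G)$; (iii) $|\operatorname{diadem}(G)| + |\operatorname{nucleus}(G)| = 2\alpha(G)$.
   Context: For $X\subseteq V(G)$, $N(X)$ is the set of vertices adjacent to some vertex of $X$, and the difference of $X$ is $d(X)=|X|-|N(X)|$. A set $S\subseteq V(G)$ is independent if no two of its vertices are adjacent. An independent set $S$ is a critical independent set if $d(S)=\max\{d(X): X\subseteq V(G)\}$; the empty set may be critical. A maximum critical independent set is a critical independent set of maximum cardinality. $\operatorname{nucleus}(G)$ is the intersection of all maximum critical independent sets of $G$, and $\operatorname{diadem}(G)$ is their union. $\alpha(G)$ is the maximum size of an independent set, with $\alpha$ of the empty graph equal to $0$. $\operatorname{corona}(G)$ is the union of all maximum independent sets of $G$. $\mu(G)$ is the size of a maximum matching. $G$ is König–Egerváry if $\alpha(G)+\mu(G)=|V(G)|$; by convention the empty graph is König–Egerváry. *)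

theory Defs
  imports Main
begin

definition simple_graph :: "'a set \<Rightarrow> ('a \<Rightarrow> 'a \<Rightarrow> bool) \<Rightarrow> bool" where
  "simple_graph V E \<longleftrightarrow> finite V \<and> (\<forall>x y. E x y \<longrightarrow> x \<in> V \<and> y \<in> V)
     \<and> (\<forall>x y. E x y \<longrightarrow> E y x) \<and> (\<forall>x. \<not> E x x)"

definition nbhd :: "('a \<Rightarrow> 'a \<Rightarrow> bool) \<Rightarrow> 'a set \<Rightarrow> 'a set" where
  "nbhd E X = {y. \<exists>x\<in>X. E x y}"

definition difference :: "('a \<Rightarrow> 'a \<Rightarrow> bool) \<Rightarrow> 'a set \<Rightarrow> int" where
  "difference E X = int (card X) - int (card (nbhd E X))"

definition indep :: "'a set \<Rightarrow> ('a \<Rightarrow> 'a \<Rightarrow> bool) \<Rightarrow> 'a set \<Rightarrow> bool" where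
  "indep V E S \<longleftrightarrow> S \<subseteq> V \<and> (\<forall>x\<in>S. \<forall>y\<in>S. \<not> E x y)"

definition critical_indep :: "'a set \<Rightarrow> ('a \<Rightarrow> 'a \<Rightarrow> bool) \<Rightarrow> 'a set \<Rightarrow> bool" where
  "critical_indep V E S \<longleftrightarrow> indep V E S \<and>
     difference E S = Max {difference E X | X. X \<subseteq> V}"

definition max_critical_indep :: "'a set \<Rightarrow> ('a \<Rightarrow> 'a \<Rightarrow> bool) \<Rightarrow> 'a set \<Rightarrow> bool" where
  "max_critical_indep V E S \<longleftrightarrow> critical_indep V E S \<and>
     card S = Max {card T | T. critical_indep V E T}"

definition nucleus :: "'a set \<Rightarrow> ('a \<Rightarrow> 'a \<Rightarrow> bool) \<Rightarrow> 'a set" where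
  "nucleus V E = \<Inter> {S. max_critical_indep V E S}"

definition diadem :: "'a set \<Rightarrow> ('a \<Rightarrow> 'a \<Rightarrow> bool) \<Rightarrow> 'a set" where
  "diadem V E = \<Union> {S. max_critical_indep V E S}"

definition alpha :: "'a set \<Rightarrow> ('a \<Rightarrow> 'a \<Rightarrow> bool) \<Rightarrow> nat" where
  "alpha V E = Max {card S | S. indep V E S}"

definition corona :: "'a set \<Rightarrow> ('a \<Rightarrow> 'a \<Rightarrow> bool) \<Rightarrow> 'a set" where
  "corona V E = \<Union> {S. indep V E S \<and> card S = alpha V E}"

definition matching :: "('a \<Rightarrow> 'a \<Rightarrow> bool) \<Rightarrow> 'a set set \<Rightarrow> bool" where
  "matching E M \<longleftrightarrow> (\<forall>e\<in>M. \<exists>x y. E x y \<and> e = {x, y})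
     \<and> (\<forall>e\<in>M. \<forall>f\<in>M. e \<noteq> f \<longrightarrow> e \<inter> f = {})"

definition mu :: "'a set \<Rightarrow> ('a \<Rightarrow> 'a \<Rightarrow> bool) \<Rightarrow> nat" where
  "mu V E = Max {card M | M. matching E M}"

definition koenig_egervary :: "'a set \<Rightarrow> ('a \<Rightarrow> 'a \<Rightarrow> bool) \<Rightarrow> bool" where
  "koenig_egervary V E \<longleftrightarrow> alpha V E + mu V E = card V"

end

theory Submission
  imports Defs
begin

text \<open>Write d(X) = |X| - |N(X)| and \<alpha>_c for the size of a maximum critical independent set.
  By Hall's theorem, a critical independent set S admits a matching m of N(S) into S: if some
  B \<subseteq> N(S) had fewer than |B| neighbours in S, removing them from S would increase d.
  Fix a maximum critical independent S with such an m. Every critical independent set lies in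
  S \<union> N(S), and every maximum critical independent set contains the unmatched part of S and exactly
  one end of each pair {x, m x}; counting gives |diadem| + |nucleus| = 2\<alpha>_c.
  Since d(X) \<le> |V| - 2\<mu> for all X, in a K\<ouml>nig-Egerv\<aacute>ry graph every maximum independent set is
  critical, so \<alpha>_c = \<alpha>; conversely \<alpha>_c = \<alpha> forces N(S) = V - S, and m becomes a matching of
  size |V| - \<alpha>. Finally, if \<alpha>_c < \<alpha> then no maximum independent set fits into S \<union> N(S), which
  contains the diadem, so diadem = corona exactly when \<alpha>_c = \<alpha>.\<close>

section \<open>Hall's marriage theorem\<close>

definition hall_condition :: "'a set \<Rightarrow> ('a \<Rightarrow> 'b set) \<Rightarrow> bool" where
  "hall_condition A R \<longleftrightarrow> (\<forall>B\<subseteq>A. card B \<le> card (\<Union>(R ` B)))"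

lemma system_of_representatives_combine:
  assumes "B \<subseteq> A" "inj_on f B" "\<forall>x\<in>B. f x \<in> R x"
    and "inj_on g (A - B)" "\<forall>x\<in>A - B. g x \<in> R x - f ` B"
  shows "\<exists>h. inj_on h A \<and> (\<forall>x\<in>A. h x \<in> R x)"
proof -
  define h where "h x = (if x \<in> B then f x else g x)" for x
  have "inj_on h (B \<union> (A - B))"
  proof (rule inj_on_Un[THEN iffD2], intro conjI)
    show "inj_on h B" "inj_on h (A - B)"
      using assms(2,4) unfolding h_def by (auto simp: inj_on_def)
    show "h ` (B - (A - B)) \<inter> h ` (A - B - B) = {}"
      using assms(1,5) unfolding h_def by (force simp: image_iff)
  qed
  moreover have "B \<union> (A - B) = A"
    using assms(1) by blast
  moreover have "\<forall>x\<in>A. h x \<in> R x"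
    using assms(3,5) unfolding h_def by auto
  ultimately show ?thesis by auto
qed

lemma hall_condition_Diff_tight:
  assumes fin: "finite A" "\<forall>x\<in>A. finite (R x)" and hall: "hall_condition A R"
    and B: "B \<subseteq> A" "card (\<Union>(R ` B)) = card B"
  shows "hall_condition (A - B) (\<lambda>x. R x - \<Union>(R ` B))"
  unfolding hall_condition_def
proof (intro allI impI)
  fix C assume C: "C \<subseteq> A - B"
  have fin_UN: "finite (\<Union>(R ` (C \<union> B)))"
    using C B(1) fin by (intro finite_UN_I) (auto intro: finite_subset)
  have "card (C \<union> B) \<le> card (\<Union>(R ` (C \<union> B)))"
    using hall C B(1) unfolding hall_condition_def
    by (metis Diff_subset Un_subset_iff subset_trans)
  moreover have "card (C \<union> B) = card C + card B"
    using C fin(1) B(1) by (intro card_Un_disjoint) (auto intro: finite_subset)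
  moreover have "card (\<Union>((\<lambda>x. R x - \<Union>(R ` B)) ` C))
      = card (\<Union>(R ` (C \<union> B))) - card B"
  proof -
    have "\<Union>((\<lambda>x. R x - \<Union>(R ` B)) ` C) = \<Union>(R ` (C \<union> B)) - \<Union>(R ` B)"
      by blast
    moreover have "finite (\<Union>(R ` B))"
      using fin_UN by (rule rev_finite_subset) auto
    ultimately show ?thesis
      using B(2) by (simp add: card_Diff_subset image_Un)
  qed
  ultimately show "card C \<le> card (\<Union>((\<lambda>x. R x - \<Union>(R ` B)) ` C))"
    by linarith
qed

lemma hall_condition_Diff_singleton:
  assumes slack: "\<forall>C. C \<subseteq> A \<and> C \<noteq> {} \<and> C \<noteq> A \<longrightarrow> card C < card (\<Union>(R ` C))"
    and "a \<in> A"
  shows "hall_condition (A - {a}) (\<lambda>x. R x - {b})"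
  unfolding hall_condition_def
proof (intro allI impI)
  fix C assume C: "C \<subseteq> A - {a}"
  show "card C \<le> card (\<Union>((\<lambda>x. R x - {b}) ` C))"
  proof (cases "C = {}")
    case False
    have "card C < card (\<Union>(R ` C))"
      using slack C False \<open>a \<in> A\<close> by blast
    also have "\<dots> \<le> card (\<Union>(R ` C) - {b}) + 1"
      using diff_card_le_card_Diff[of "{b}" "\<Union>(R ` C)"] by simp
    also have "\<Union>(R ` C) - {b} = \<Union>((\<lambda>x. R x - {b}) ` C)"
      by blast
    finally show ?thesis by simp
  qed auto
qed

theorem hall_marriage:
  assumes "finite A" "\<forall>x\<in>A. finite (R x)" "hall_condition A R"
  shows "\<exists>f. inj_on f A \<and> (\<forall>x\<in>A. f x \<in> R x)"
  using assms
proof (induction "card A" arbitrary: A R rule: less_induct)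
  case less
  note fin = less.prems(1,2) and hall = less.prems(3)
  show ?case
  proof (cases "\<exists>B. B \<subseteq> A \<and> B \<noteq> {} \<and> B \<noteq> A \<and> card (\<Union>(R ` B)) \<le> card B")
    case True
    then obtain B where B: "B \<subseteq> A" "B \<noteq> {}" "B \<noteq> A" "card (\<Union>(R ` B)) \<le> card B"
      by blast
    have tight: "card (\<Union>(R ` B)) = card B"
      using hall B(1,4) unfolding hall_condition_def by (simp add: le_antisym)
    have "B \<subset> A" "A - B \<subset> A"
      using B(1-3) by blast+
    then have lt: "card B < card A" "card (A - B) < card A"
      using fin(1) by (auto intro: psubset_card_mono)
    have "finite B"
      using B(1) fin(1) by (rule finite_subset)
    moreover have "\<forall>x\<in>B. finite (R x)"
      using fin(2) B(1) by blast
    moreover have "hall_condition B R"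
      using hall B(1) unfolding hall_condition_def by (meson subset_trans)
    ultimately obtain f where f: "inj_on f B" "\<forall>x\<in>B. f x \<in> R x"
      using less.hyps[OF lt(1)] by blast
    have finR: "\<forall>x\<in>A - B. finite (R x - \<Union>(R ` B))"
      using fin(2) by blast
    have hallR: "hall_condition (A - B) (\<lambda>x. R x - \<Union>(R ` B))"
      using fin hall B(1) tight by (rule hall_condition_Diff_tight)
    obtain g where g: "inj_on g (A - B)" "\<forall>x\<in>A - B. g x \<in> R x - \<Union>(R ` B)"
      using less.hyps[OF lt(2) finite_Diff[OF fin(1)] finR hallR] by blast
    have "f ` B \<subseteq> \<Union>(R ` B)"
      using f(2) by blast
    then have "\<forall>x\<in>A - B. g x \<in> R x - f ` B"
      using g(2) by blast
    then show ?thesis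
      using system_of_representatives_combine[OF B(1) f g(1)] by blast
  next
    case False
    then have slack: "\<forall>C. C \<subseteq> A \<and> C \<noteq> {} \<and> C \<noteq> A \<longrightarrow> card C < card (\<Union>(R ` C))"
      using not_le by blast
    show ?thesis
    proof (cases "A = {}")
      case False
      then obtain a where a: "a \<in> A" by blast
      have "card {a} \<le> card (\<Union>(R ` {a}))"
        using hall[unfolded hall_condition_def, rule_format, of "{a}"] a by blast
      then have "R a \<noteq> {}" by auto
      then obtain b where b: "b \<in> R a" by blast
      have lt: "card (A - {a}) < card A"
        using fin(1) a by (rule card_Diff1_less)
      have finR: "\<forall>x\<in>A - {a}. finite (R x - {b})"
        using fin(2) by blast
      have hallR: "hall_condition (A - {a}) (\<lambda>x. R x - {b})"
        using slack a by (rule hall_condition_Diff_singleton)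
      obtain g where g: "inj_on g (A - {a})" "\<forall>x\<in>A - {a}. g x \<in> R x - {b}"
        using less.hyps[OF lt finite_Diff[OF fin(1)] finR hallR] by blast
      have "\<forall>x\<in>A - {a}. g x \<in> R x - (\<lambda>_. b) ` {a}"
        using g(2) by simp
      then show ?thesis
        using system_of_representatives_combine[of "{a}" A "\<lambda>_. b" R g] a b g(1) by simp
    qed simp
  qed
qed


section \<open>Critical independent sets\<close>

lemma nbhd_mono: "X \<subseteq> Y \<Longrightarrow> nbhd E X \<subseteq> nbhd E Y"
  unfolding nbhd_def by blast

lemma nbhd_Un: "nbhd E (X \<union> Y) = nbhd E X \<union> nbhd E Y"
  unfolding nbhd_def by blast

lemma indep_disjoint_nbhd: "indep V E S \<Longrightarrow> S \<inter> nbhd E S = {}"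
  unfolding indep_def nbhd_def by blast

definition matching_into ::
    "('a \<Rightarrow> 'a \<Rightarrow> bool) \<Rightarrow> ('a \<Rightarrow> 'a) \<Rightarrow> 'a set \<Rightarrow> 'a set \<Rightarrow> bool" where
  "matching_into E m A B \<longleftrightarrow> inj_on m A \<and> (\<forall>x\<in>A. m x \<in> B \<and> E x (m x))"

lemma matching_into_matching:
  assumes m: "matching_into E m A B" and "A \<inter> B = {}"
  shows "matching E ((\<lambda>x. {x, m x}) ` A)" "card ((\<lambda>x. {x, m x}) ` A) = card A"
proof -
  have m_inj: "\<And>x y. x \<in> A \<Longrightarrow> y \<in> A \<Longrightarrow> m x = m y \<Longrightarrow> x = y"
    and mB: "\<forall>x\<in>A. m x \<in> B"
    using m unfolding matching_into_def inj_on_def by auto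
  show "matching E ((\<lambda>x. {x, m x}) ` A)"
    using m m_inj \<open>A \<inter> B = {}\<close> unfolding matching_def matching_into_def by fast
  have "inj_on (\<lambda>x. {x, m x}) A"
    using mB \<open>A \<inter> B = {}\<close> unfolding inj_on_def by (metis disjoint_iff doubleton_eq_iff)
  then show "card ((\<lambda>x. {x, m x}) ` A) = card A"
    by (rule card_image)
qed

locale fin_simple_graph =
  fixes V :: "'a set" and E :: "'a \<Rightarrow> 'a \<Rightarrow> bool"
  assumes simple_graph: "simple_graph V E"
begin

lemma finite_V: "finite V"
  using simple_graph unfolding simple_graph_def by blast

lemma edge_in_V: "E x y \<Longrightarrow> x \<in> V \<and> y \<in> V"
  using simple_graph unfolding simple_graph_def by blast

lemma edge_sym: "E x y \<Longrightarrow> E y x"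
  using simple_graph unfolding simple_graph_def by blast

lemma edge_irrefl: "\<not> E x x"
  using simple_graph unfolding simple_graph_def by blast

lemma nbhd_subset_V: "nbhd E X \<subseteq> V"
  unfolding nbhd_def using edge_in_V by blast

lemma finite_nbhd: "finite (nbhd E X)"
  using nbhd_subset_V finite_V by (rule finite_subset)

lemma indep_finite: "indep V E S \<Longrightarrow> finite S"
  unfolding indep_def using finite_V finite_subset by blast

lemma nbhd_indep_subset: "indep V E S \<Longrightarrow> nbhd E S \<subseteq> V - S"
  using nbhd_subset_V indep_disjoint_nbhd by blast

definition crit_diff :: int where
  "crit_diff = Max (difference E ` Pow V)"

lemma difference_le_crit_diff: "X \<subseteq> V \<Longrightarrow> difference E X \<le> crit_diff"
  unfolding crit_diff_def using finite_V by (intro Max_ge) auto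

lemma crit_diff_attained: "\<exists>X\<subseteq>V. difference E X = crit_diff"
proof -
  have "crit_diff \<in> difference E ` Pow V"
    unfolding crit_diff_def using finite_V by (intro Max_in) auto
  then show ?thesis by auto
qed

lemma critical_indep_iff: "critical_indep V E S \<longleftrightarrow> indep V E S \<and> crit_diff \<le> difference E S"
proof -
  have "{difference E X | X. X \<subseteq> V} = difference E ` Pow V"
    by blast
  moreover have "indep V E S \<Longrightarrow> difference E S \<le> crit_diff"
    unfolding indep_def by (simp add: difference_le_crit_diff)
  ultimately show ?thesis
    unfolding critical_indep_def crit_diff_def by auto
qed

text \<open>Deleting the neighbours inside X loses at least as many vertices of X as it does neighbours,
  because the neighbourhood of what remains avoids X.\<close>
lemma difference_Diff_nbhd:
  assumes "X \<subseteq> V"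
  shows "indep V E (X - nbhd E X)" "difference E X \<le> difference E (X - nbhd E X)"
proof -
  let ?I = "X - nbhd E X"
  show "indep V E ?I"
    using assms edge_sym unfolding indep_def nbhd_def by blast
  have "nbhd E ?I \<subseteq> nbhd E X - X"
    using edge_sym unfolding nbhd_def by blast
  then have "card (nbhd E ?I) \<le> card (nbhd E X - X)"
    by (simp add: card_mono finite_nbhd)
  moreover have "card X = card (X \<inter> nbhd E X) + card ?I"
    using assms finite_V by (meson card_Int_Diff finite_subset)
  moreover have "card (nbhd E X) = card (nbhd E X \<inter> X) + card (nbhd E X - X)"
    using finite_nbhd by (rule card_Int_Diff)
  ultimately show "difference E X \<le> difference E ?I"
    unfolding difference_def by (simp add: Int_commute)
qed

lemma critical_indep_exists: "\<exists>S. critical_indep V E S"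
proof -
  obtain X where X: "X \<subseteq> V" "difference E X = crit_diff"
    using crit_diff_attained by blast
  then have "critical_indep V E (X - nbhd E X)"
    using difference_Diff_nbhd[OF X(1)] unfolding critical_indep_iff by simp
  then show ?thesis ..
qed

definition crit_indep_number :: nat where
  "crit_indep_number = Max {card T | T. critical_indep V E T}"

lemma finite_card_critical_indep: "finite {card T | T. critical_indep V E T}"
proof (rule finite_subset)
  show "{card T | T. critical_indep V E T} \<subseteq> {..card V}"
    using finite_V unfolding critical_indep_def indep_def by (auto intro: card_mono)
qed simp

lemma card_le_crit_indep_number: "critical_indep V E T \<Longrightarrow> card T \<le> crit_indep_number"
  unfolding crit_indep_number_def using finite_card_critical_indep by (intro Max_ge) auto

lemma max_critical_indep_iff:
  "max_critical_indep V E S \<longleftrightarrow> critical_indep V E S \<and> card S = crit_indep_number"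
  unfolding max_critical_indep_def crit_indep_number_def ..

lemma max_critical_indep_exists: "\<exists>S. max_critical_indep V E S"
proof -
  have "crit_indep_number \<in> {card T | T. critical_indep V E T}"
    unfolding crit_indep_number_def using finite_card_critical_indep critical_indep_exists
    by (intro Max_in) auto
  then show ?thesis
    unfolding max_critical_indep_iff by auto
qed

lemma finite_card_indep: "finite {card S | S. indep V E S}"
proof (rule finite_subset)
  show "{card S | S. indep V E S} \<subseteq> {..card V}"
    using finite_V unfolding indep_def by (auto intro: card_mono)
qed simp

lemma card_le_alpha: "indep V E S \<Longrightarrow> card S \<le> alpha V E"
  unfolding alpha_def using finite_card_indep by (intro Max_ge) auto

lemma maximum_indep_exists: "\<exists>S. indep V E S \<and> card S = alpha V E"
proof -
  have "indep V E {}"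
    unfolding indep_def by simp
  then have "alpha V E \<in> {card S | S. indep V E S}"
    unfolding alpha_def using finite_card_indep by (intro Max_in) auto
  then show ?thesis by auto
qed

lemma crit_indep_number_le_alpha: "crit_indep_number \<le> alpha V E"
  using max_critical_indep_exists card_le_alpha
  unfolding max_critical_indep_iff critical_indep_iff by metis

lemma critical_indep_matching_into:
  assumes "critical_indep V E S"
  shows "\<exists>m. matching_into E m (nbhd E S) S"
proof -
  have S: "indep V E S" "difference E S = crit_diff"
    using assms difference_le_crit_diff unfolding critical_indep_iff indep_def by force+
  have hall: "hall_condition (nbhd E S) (\<lambda>x. {s\<in>S. E x s})"
    unfolding hall_condition_def
  proof (intro allI impI)
    fix B assume B: "B \<subseteq> nbhd E S"
    let ?W = "S \<inter> nbhd E B"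
    have W: "\<Union>((\<lambda>x. {s\<in>S. E x s}) ` B) = ?W"
      unfolding nbhd_def by blast
    have "nbhd E (S - nbhd E B) \<subseteq> nbhd E S - B"
      using edge_sym unfolding nbhd_def by blast
    then have "card (nbhd E (S - nbhd E B)) \<le> card (nbhd E S) - card B"
      using B finite_nbhd by (metis card_Diff_subset card_mono finite_Diff finite_subset)
    moreover have "difference E (S - nbhd E B) \<le> difference E S"
      using S difference_le_crit_diff[of "S - nbhd E B"] unfolding indep_def by auto
    moreover have "card (S - nbhd E B) = card S - card ?W"
      using S(1) indep_finite by (simp add: card_Diff_subset_Int)
    moreover have "card B \<le> card (nbhd E S)" "card ?W \<le> card S"
      using B S(1) indep_finite finite_nbhd by (simp_all add: card_mono)
    ultimately show "card B \<le> card (\<Union>((\<lambda>x. {s\<in>S. E x s}) ` B))"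
      unfolding W difference_def by linarith
  qed
  have "\<forall>x\<in>nbhd E S. finite {s\<in>S. E x s}"
    using indep_finite[OF S(1)] by simp
  then obtain m where "inj_on m (nbhd E S)" "\<forall>x\<in>nbhd E S. m x \<in> {s\<in>S. E x s}"
    using hall_marriage[OF finite_nbhd _ hall] by blast
  then show ?thesis
    unfolding matching_into_def by auto
qed

text \<open>Since T is critical, its part A outside S \<union> N(S) must pay for the neighbours of T outside
  N(T \<inter> S); the matching sends T \<inter> N(S) injectively into S, i.e. into neighbours of T that A
  does not see.\<close>
lemma card_nbhd_outside_le:
  assumes S: "critical_indep V E S" and T: "critical_indep V E T"
  defines "A \<equiv> T - (S \<union> nbhd E S)"
  shows "card (nbhd E A - nbhd E S) \<le> card A"
proof -
  obtain m where m: "matching_into E m (nbhd E S) S"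
    using critical_indep_matching_into[OF S] by blast
  have indS: "indep V E S" and indT: "indep V E T" "difference E T = crit_diff"
    using S T difference_le_crit_diff unfolding critical_indep_iff indep_def by force+
  define B where "B = T \<inter> nbhd E S"
  define C where "C = T \<inter> S"
  have fin: "finite A" "finite B" "finite C"
    using indep_finite[OF indT(1)] unfolding A_def B_def C_def by auto
  have "card T = card A + card B + card C"
  proof -
    have "T = A \<union> B \<union> C" "A \<inter> B = {}" "(A \<union> B) \<inter> C = {}"
      using indep_disjoint_nbhd[OF indS] unfolding A_def B_def C_def by blast+
    then show ?thesis
      using fin by (simp add: card_Un_disjoint)
  qed
  moreover have "C \<subseteq> V"
    using indS unfolding C_def indep_def by blast
  then have "difference E C \<le> difference E T"
    using indT(2) by (simp add: difference_le_crit_diff)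
  moreover have "nbhd E C \<subseteq> nbhd E T"
    unfolding C_def by (rule nbhd_mono) blast
  ultimately have "card (nbhd E T - nbhd E C) \<le> card A + card B"
    unfolding difference_def using finite_nbhd by (simp add: card_Diff_subset card_mono)
  moreover have "(nbhd E A - nbhd E S) \<union> m ` B \<subseteq> nbhd E T - nbhd E C"
  proof -
    have "nbhd E A - nbhd E S \<subseteq> nbhd E T - nbhd E C"
      using nbhd_mono[of A T] nbhd_mono[of C S] unfolding A_def C_def by blast
    moreover have "m ` B \<subseteq> nbhd E T - nbhd E C"
      using m indS unfolding matching_into_def indep_def nbhd_def B_def C_def by blast
    ultimately show ?thesis by blast
  qed
  then have "card ((nbhd E A - nbhd E S) \<union> m ` B) \<le> card (nbhd E T - nbhd E C)"
    using finite_nbhd by (simp add: card_mono)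
  moreover have "card ((nbhd E A - nbhd E S) \<union> m ` B) = card (nbhd E A - nbhd E S) + card B"
  proof -
    have "(nbhd E A - nbhd E S) \<inter> m ` B = {}"
      using m edge_sym unfolding matching_into_def A_def B_def nbhd_def by blast
    moreover have "card (m ` B) = card B"
      using m unfolding matching_into_def B_def by (meson card_image inj_on_subset inf_le2)
    ultimately show ?thesis
      using finite_nbhd fin(2) by (simp add: card_Un_disjoint)
  qed
  ultimately show ?thesis
    by linarith
qed

lemma critical_indep_Un_outside:
  assumes S: "critical_indep V E S" and T: "critical_indep V E T"
  shows "critical_indep V E (S \<union> (T - (S \<union> nbhd E S)))"
proof -
  define A where "A = T - (S \<union> nbhd E S)"
  have indS: "indep V E S" "crit_diff \<le> difference E S" and indT: "indep V E T"
    using S T unfolding critical_indep_iff by auto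
  have "indep V E (S \<union> A)"
    using indS(1) indT edge_sym unfolding indep_def A_def nbhd_def by blast
  moreover have "card (S \<union> A) = card S + card A"
    using indep_finite[OF indS(1)] indep_finite[OF indT] unfolding A_def
    by (intro card_Un_disjoint) auto
  moreover have "card (nbhd E (S \<union> A)) = card (nbhd E S) + card (nbhd E A - nbhd E S)"
  proof -
    have "nbhd E (S \<union> A) = nbhd E S \<union> (nbhd E A - nbhd E S)"
      unfolding nbhd_Un by blast
    moreover have "card (nbhd E S \<union> (nbhd E A - nbhd E S))
        = card (nbhd E S) + card (nbhd E A - nbhd E S)"
      using finite_nbhd by (intro card_Un_disjoint) auto
    ultimately show ?thesis
      by simp
  qed
  ultimately show ?thesis
    using card_nbhd_outside_le[OF S T] indS(2) unfolding critical_indep_iff difference_def A_def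
    by linarith
qed

lemma critical_indep_subset_closed_nbhd:
  assumes S: "max_critical_indep V E S" and T: "critical_indep V E T"
  shows "T \<subseteq> S \<union> nbhd E S"
proof -
  define A where "A = T - (S \<union> nbhd E S)"
  have "critical_indep V E (S \<union> A)"
    using critical_indep_Un_outside[OF _ T] S unfolding A_def max_critical_indep_iff by blast
  then have "card (S \<union> A) \<le> card S"
    using card_le_crit_indep_number S unfolding max_critical_indep_iff by simp
  moreover have "finite A" "S \<inter> A = {}"
    using T indep_finite unfolding critical_indep_def A_def by auto
  moreover have "finite S"
    using S indep_finite unfolding max_critical_indep_iff critical_indep_def by blast
  ultimately have "A = {}"
    by (simp add: card_Un_disjoint)
  then show ?thesis
    unfolding A_def by blast
qed

lemma card_split_closed_nbhd:
  assumes S: "indep V E S" and m: "matching_into E m (nbhd E S) S" and Y: "Y \<subseteq> S \<union> nbhd E S"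
  shows "card Y = card (Y \<inter> (S - m ` nbhd E S)) + card (Y \<inter> nbhd E S)
    + card {x \<in> nbhd E S. m x \<in> Y}"
proof -
  let ?D = "nbhd E S" and ?U = "S - m ` nbhd E S"
  let ?M = "m ` {x \<in> ?D. m x \<in> Y}"
  have mD: "m ` ?D \<subseteq> S" "inj_on m ?D"
    using m unfolding matching_into_def by auto
  have fin: "finite (Y \<inter> ?U)" "finite (Y \<inter> ?D)" "finite ?M"
    using indep_finite[OF S] finite_nbhd by auto
  have "Y = (Y \<inter> ?U \<union> Y \<inter> ?D) \<union> ?M"
    using Y mD(1) by auto
  moreover have "card (Y \<inter> ?U \<union> Y \<inter> ?D) = card (Y \<inter> ?U) + card (Y \<inter> ?D)"
    using fin indep_disjoint_nbhd[OF S] by (intro card_Un_disjoint) auto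
  moreover have "card (Y \<inter> ?U \<union> Y \<inter> ?D \<union> ?M) = card (Y \<inter> ?U \<union> Y \<inter> ?D) + card ?M"
    using fin indep_disjoint_nbhd[OF S] mD(1) by (intro card_Un_disjoint) auto
  moreover have "card ?M = card {x \<in> ?D. m x \<in> Y}"
    using mD(2) by (rule card_image[OF inj_on_subset]) blast
  ultimately show ?thesis
    by simp
qed

lemma card_indep_matched:
  assumes S: "indep V E S" and m: "matching_into E m (nbhd E S) S"
  shows "card S = card (S - m ` nbhd E S) + card (nbhd E S)"
proof -
  have "S \<inter> (S - m ` nbhd E S) = S - m ` nbhd E S" "S \<inter> nbhd E S = {}"
    "{x \<in> nbhd E S. m x \<in> S} = nbhd E S"
    using indep_disjoint_nbhd[OF S] m unfolding matching_into_def by auto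
  then show ?thesis
    using card_split_closed_nbhd[OF S m, of S] by simp
qed

lemma card_indep_in_closed_nbhd:
  assumes S: "indep V E S" and m: "matching_into E m (nbhd E S) S"
    and T: "indep V E T" "T \<subseteq> S \<union> nbhd E S"
  shows "card T = card (T \<inter> (S - m ` nbhd E S))
    + card (T \<inter> nbhd E S \<union> {x \<in> nbhd E S. m x \<in> T})"
proof -
  have "\<forall>x\<in>nbhd E S. \<not> (x \<in> T \<and> m x \<in> T)"
    using m T(1) unfolding matching_into_def indep_def by blast
  then have "card (T \<inter> nbhd E S \<union> {x \<in> nbhd E S. m x \<in> T})
      = card (T \<inter> nbhd E S) + card {x \<in> nbhd E S. m x \<in> T}"
    using finite_nbhd by (intro card_Un_disjoint) auto
  then show ?thesis
    using card_split_closed_nbhd[OF S m T(2)] by simp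
qed

lemma card_indep_in_closed_nbhd_le:
  assumes S: "indep V E S" and m: "matching_into E m (nbhd E S) S"
    and T: "indep V E T" "T \<subseteq> S \<union> nbhd E S"
  shows "card T \<le> card S"
proof -
  have "card (T \<inter> (S - m ` nbhd E S)) \<le> card (S - m ` nbhd E S)"
    "card (T \<inter> nbhd E S \<union> {x \<in> nbhd E S. m x \<in> T}) \<le> card (nbhd E S)"
    using indep_finite[OF S] finite_nbhd by (auto intro: card_mono)
  then show ?thesis
    using card_indep_in_closed_nbhd[OF S m T] card_indep_matched[OF S m] by linarith
qed

lemma max_critical_indep_structure:
  assumes S: "max_critical_indep V E S" and m: "matching_into E m (nbhd E S) S"
    and T: "max_critical_indep V E T"
  shows "S - m ` nbhd E S \<subseteq> T" "\<forall>x\<in>nbhd E S. x \<in> T \<longleftrightarrow> m x \<notin> T"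
proof -
  let ?D = "nbhd E S" and ?U = "S - m ` nbhd E S"
  let ?P = "T \<inter> nbhd E S \<union> {x \<in> nbhd E S. m x \<in> T}"
  have indS: "indep V E S" and indT: "indep V E T" and "card T = card S"
    using S T unfolding max_critical_indep_iff critical_indep_def by auto
  have "T \<subseteq> S \<union> ?D"
    using critical_indep_subset_closed_nbhd S T unfolding max_critical_indep_iff by blast
  have "card (T \<inter> ?U) \<le> card ?U" "card ?P \<le> card ?D"
    using indep_finite[OF indS] finite_nbhd by (auto intro: card_mono)
  then have "card (T \<inter> ?U) = card ?U" "card ?P = card ?D"
    using card_indep_in_closed_nbhd[OF indS m indT \<open>T \<subseteq> S \<union> ?D\<close>] card_indep_matched[OF indS m]
      \<open>card T = card S\<close> by linarith+
  then have "T \<inter> ?U = ?U" "?P = ?D"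
    using indep_finite[OF indS] finite_nbhd by (simp_all add: card_subset_eq)
  moreover have "\<forall>x\<in>?D. \<not> (x \<in> T \<and> m x \<in> T)"
    using m indT unfolding matching_into_def indep_def by blast
  ultimately show "?U \<subseteq> T" "\<forall>x\<in>?D. x \<in> T \<longleftrightarrow> m x \<notin> T"
    by blast+
qed

text \<open>Every member contains exactly one end of each pair {x, m x}, so an end lies in the union
  iff the other end misses the intersection: each pair contributes exactly 2 to the sum.\<close>
lemma card_Union_Inter_alternating:
  assumes S: "indep V E S" and m: "matching_into E m (nbhd E S) S" and "\<Gamma> \<noteq> {}"
    and \<Gamma>: "\<And>T. T \<in> \<Gamma> \<Longrightarrow>
      T \<subseteq> S \<union> nbhd E S \<and> S - m ` nbhd E S \<subseteq> T \<and> (\<forall>x\<in>nbhd E S. x \<in> T \<longleftrightarrow> m x \<notin> T)"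
  shows "card (\<Union>\<Gamma>) + card (\<Inter>\<Gamma>) = 2 * card S"
proof -
  let ?D = "nbhd E S" and ?U = "S - m ` nbhd E S"
  have sub: "\<Union>\<Gamma> \<subseteq> S \<union> ?D" "\<Inter>\<Gamma> \<subseteq> S \<union> ?D"
    using \<Gamma> \<open>\<Gamma> \<noteq> {}\<close> by blast+
  have U: "\<Union>\<Gamma> \<inter> ?U = ?U" "\<Inter>\<Gamma> \<inter> ?U = ?U"
    using \<Gamma> \<open>\<Gamma> \<noteq> {}\<close> by blast+
  have flip: "{x \<in> ?D. m x \<in> \<Union>\<Gamma>} = ?D - \<Inter>\<Gamma>" "{x \<in> ?D. m x \<in> \<Inter>\<Gamma>} = ?D - \<Union>\<Gamma>"
    using \<Gamma> by blast+
  have "card ?D = card (\<Union>\<Gamma> \<inter> ?D) + card (?D - \<Union>\<Gamma>)"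
    "card ?D = card (\<Inter>\<Gamma> \<inter> ?D) + card (?D - \<Inter>\<Gamma>)"
    using finite_nbhd card_Int_Diff[of ?D] by (simp_all add: Int_commute)
  then show ?thesis
    using card_split_closed_nbhd[OF S m sub(1)] card_split_closed_nbhd[OF S m sub(2)]
      card_indep_matched[OF S m] U flip by simp
qed

lemma card_diadem_nucleus: "card (diadem V E) + card (nucleus V E) = 2 * crit_indep_number"
proof -
  obtain S where S: "max_critical_indep V E S"
    using max_critical_indep_exists by blast
  then have indS: "indep V E S" and "card S = crit_indep_number"
    unfolding max_critical_indep_iff critical_indep_def by auto
  obtain m where m: "matching_into E m (nbhd E S) S"
    using critical_indep_matching_into S unfolding max_critical_indep_iff by blast
  have "card (\<Union>{T. max_critical_indep V E T}) + card (\<Inter>{T. max_critical_indep V E T})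
      = 2 * card S"
  proof (rule card_Union_Inter_alternating[OF indS m])
    show "{T. max_critical_indep V E T} \<noteq> {}"
      using S by blast
    fix T assume "T \<in> {T. max_critical_indep V E T}"
    then show "T \<subseteq> S \<union> nbhd E S \<and> S - m ` nbhd E S \<subseteq> T
        \<and> (\<forall>x\<in>nbhd E S. x \<in> T \<longleftrightarrow> m x \<notin> T)"
      using critical_indep_subset_closed_nbhd[OF S] max_critical_indep_structure[OF S m]
      unfolding max_critical_indep_iff by auto
  qed
  then show ?thesis
    unfolding diadem_def nucleus_def \<open>card S = crit_indep_number\<close> .
qed

section \<open>Matchings and K\<ouml>nig-Egerv\<aacute>ry graphs\<close>

lemma matching_edge: "matching E M \<Longrightarrow> e \<in> M \<Longrightarrow> \<exists>x y. E x y \<and> e = {x, y}"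
  unfolding matching_def by blast

lemma matching_disjoint: "matching E M \<Longrightarrow> e \<in> M \<Longrightarrow> f \<in> M \<Longrightarrow> e \<noteq> f \<Longrightarrow> e \<inter> f = {}"
  unfolding matching_def by blast

lemma finite_matching: "matching E M \<Longrightarrow> finite M"
proof -
  assume M: "matching E M"
  then have "M \<subseteq> Pow V"
    using matching_edge edge_in_V by blast
  then show ?thesis
    using finite_V by (simp add: finite_subset)
qed

lemma card_Int_Union_matching:
  assumes M: "matching E M"
  shows "card (Y \<inter> \<Union>M) = (\<Sum>e\<in>M. card (Y \<inter> e))"
  unfolding Int_Union
proof (rule card_UN_disjoint)
  show "finite M"
    using M by (rule finite_matching)
  show "\<forall>e\<in>M. finite (Y \<inter> e)"
  proof
    fix e assume "e \<in> M"
    then obtain x y where "e = {x, y}"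
      using matching_edge[OF M] by blast
    then show "finite (Y \<inter> e)"
      by simp
  qed
  show "\<forall>e\<in>M. \<forall>f\<in>M. e \<noteq> f \<longrightarrow> Y \<inter> e \<inter> (Y \<inter> f) = {}"
    using matching_disjoint[OF M] by blast
qed

lemma card_Union_matching:
  assumes M: "matching E M"
  shows "card (\<Union>M) = 2 * card M"
proof -
  have "\<Union>M \<subseteq> V"
    using matching_edge[OF M] edge_in_V by blast
  then have "card (\<Union>M) = (\<Sum>e\<in>M. card (V \<inter> e))"
    using card_Int_Union_matching[OF M, of V] by (simp add: Int_absorb1)
  also have "\<dots> = (\<Sum>e\<in>M. 2)"
  proof (rule sum.cong)
    fix e assume "e \<in> M"
    then obtain x y where "E x y" "e = {x, y}"
      using matching_edge[OF M] by blast
    then show "card (V \<inter> e) = 2"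
      using edge_in_V edge_irrefl by (metis Int_absorb1 card_2_iff empty_subsetI insert_subset)
  qed simp
  finally show ?thesis
    by simp
qed

lemma finite_card_matching: "finite {card M | M. matching E M}"
proof (rule finite_subset)
  show "{card M | M. matching E M} \<subseteq> {..card (Pow V)}"
    using matching_edge edge_in_V finite_V by (fastforce intro: card_mono)
qed simp

lemma card_le_mu: "matching E M \<Longrightarrow> card M \<le> mu V E"
  unfolding mu_def using finite_card_matching by (intro Max_ge) auto

lemma maximum_matching_exists: "\<exists>M. matching E M \<and> card M = mu V E"
proof -
  have "matching E {}"
    unfolding matching_def by simp
  then have "mu V E \<in> {card M | M. matching E M}"
    unfolding mu_def using finite_card_matching by (intro Max_in) auto
  then show ?thesis by auto
qed

lemma card_Int_edge_le_nbhd: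
  assumes "E x y"
  shows "card (X \<inter> {x, y}) \<le> card (nbhd E X \<inter> {x, y})"
proof -
  let ?swap = "\<lambda>z. if z = x then y else x"
  have "x \<noteq> y"
    using assms edge_irrefl by blast
  then have "inj_on ?swap (X \<inter> {x, y})"
    by (auto simp: inj_on_def)
  moreover have "?swap ` (X \<inter> {x, y}) \<subseteq> nbhd E X \<inter> {x, y}"
    using assms edge_sym unfolding nbhd_def by auto
  ultimately show ?thesis
    using card_inj_on_le by blast
qed

lemma difference_le_matching:
  assumes M: "matching E M" and X: "X \<subseteq> V"
  shows "difference E X \<le> int (card V) - 2 * int (card M)"
proof -
  have "card (X \<inter> \<Union>M) \<le> card (nbhd E X \<inter> \<Union>M)"
    unfolding card_Int_Union_matching[OF M]
    using matching_edge[OF M] card_Int_edge_le_nbhd by (intro sum_mono) blast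
  moreover have "card (nbhd E X \<inter> \<Union>M) \<le> card (nbhd E X)"
    using finite_nbhd by (simp add: card_mono)
  moreover have "\<Union>M \<subseteq> V"
    using matching_edge[OF M] edge_in_V by blast
  then have "card (X - \<Union>M) \<le> card V - card (\<Union>M)" "card (\<Union>M) \<le> card V"
    using X finite_V card_mono[of "V - \<Union>M" "X - \<Union>M"]
    by (auto simp: card_Diff_subset finite_subset card_mono)
  moreover have "card X = card (X \<inter> \<Union>M) + card (X - \<Union>M)"
    using X finite_V by (meson card_Int_Diff finite_subset)
  ultimately show ?thesis
    unfolding difference_def using card_Union_matching[OF M] by linarith
qed

lemma difference_indep_ge:
  assumes "indep V E I"
  shows "2 * int (card I) - int (card V) \<le> difference E I"
proof -
  have "card (nbhd E I) \<le> card (V - I)"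
    using nbhd_indep_subset[OF assms] finite_V by (simp add: card_mono)
  also have "\<dots> = card V - card I"
    using assms finite_V unfolding indep_def by (meson card_Diff_subset finite_subset)
  finally show ?thesis
    using assms finite_V card_mono[of V I] unfolding difference_def indep_def by linarith
qed

lemma alpha_plus_mu_le: "alpha V E + mu V E \<le> card V"
proof -
  obtain I where I: "indep V E I" "card I = alpha V E"
    using maximum_indep_exists by blast
  obtain M where M: "matching E M" "card M = mu V E"
    using maximum_matching_exists by blast
  have "I \<subseteq> V"
    using I(1) unfolding indep_def by blast
  then have "2 * int (card I) - int (card V) \<le> int (card V) - 2 * int (card M)"
    using difference_indep_ge[OF I(1)] difference_le_matching[OF M(1) \<open>I \<subseteq> V\<close>] by linarith
  then show ?thesis
    using I(2) M(2) by linarith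
qed

lemma koenig_egervary_maximum_indep_critical:
  assumes "koenig_egervary V E" and I: "indep V E I" "card I = alpha V E"
  shows "critical_indep V E I"
proof -
  obtain M where M: "matching E M" "card M = mu V E"
    using maximum_matching_exists by blast
  obtain X where X: "X \<subseteq> V" "difference E X = crit_diff"
    using crit_diff_attained by blast
  have "crit_diff \<le> int (card V) - 2 * int (card M)"
    using difference_le_matching[OF M(1) X(1)] X(2) by simp
  also have "\<dots> \<le> difference E I"
    using difference_indep_ge[OF I(1)] assms(1) I(2) M(2) unfolding koenig_egervary_def by simp
  finally show ?thesis
    unfolding critical_indep_iff using I(1) by simp
qed

lemma maximum_indep_nbhd:
  assumes S: "indep V E S" "card S = alpha V E"
  shows "nbhd E S = V - S"
proof
  show "nbhd E S \<subseteq> V - S"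
    using S(1) by (rule nbhd_indep_subset)
  show "V - S \<subseteq> nbhd E S"
  proof
    fix v assume v: "v \<in> V - S"
    show "v \<in> nbhd E S"
    proof (rule ccontr)
      assume "v \<notin> nbhd E S"
      then have "indep V E (insert v S)"
        using S(1) v edge_irrefl edge_sym unfolding indep_def nbhd_def by blast
      then have "card (insert v S) \<le> card S"
        using card_le_alpha S(2) by simp
      then show False
        using v indep_finite[OF S(1)] by simp
    qed
  qed
qed

theorem koenig_egervary_iff_crit_indep_number:
  "koenig_egervary V E \<longleftrightarrow> crit_indep_number = alpha V E"
proof
  assume KE: "koenig_egervary V E"
  obtain I where I: "indep V E I" "card I = alpha V E"
    using maximum_indep_exists by blast
  then have "alpha V E \<le> crit_indep_number"
    using card_le_crit_indep_number koenig_egervary_maximum_indep_critical[OF KE] by metis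
  then show "crit_indep_number = alpha V E"
    using crit_indep_number_le_alpha by simp
next
  assume eq: "crit_indep_number = alpha V E"
  obtain S where S: "max_critical_indep V E S"
    using max_critical_indep_exists by blast
  then have indS: "indep V E S" and cardS: "card S = alpha V E"
    using eq unfolding max_critical_indep_iff critical_indep_def by auto
  obtain m where "matching_into E m (nbhd E S) S"
    using critical_indep_matching_into S unfolding max_critical_indep_iff by blast
  then have "matching E ((\<lambda>x. {x, m x}) ` nbhd E S)"
    "card ((\<lambda>x. {x, m x}) ` nbhd E S) = card V - card S"
    using matching_into_matching[of E m "nbhd E S" S] indep_disjoint_nbhd[OF indS]
      maximum_indep_nbhd[OF indS cardS] indS finite_V
    unfolding indep_def by (auto simp: card_Diff_subset finite_subset Int_commute)
  then have "card V - card S \<le> mu V E"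
    using card_le_mu by metis
  then show "koenig_egervary V E"
    using alpha_plus_mu_le cardS unfolding koenig_egervary_def by linarith
qed

lemma max_critical_indep_iff_maximum_indep:
  assumes KE: "koenig_egervary V E"
  shows "max_critical_indep V E S \<longleftrightarrow> indep V E S \<and> card S = alpha V E"
proof -
  have "crit_indep_number = alpha V E"
    using KE koenig_egervary_iff_crit_indep_number by blast
  then show ?thesis
    using koenig_egervary_maximum_indep_critical[OF KE, of S] critical_indep_def[of V E S]
    unfolding max_critical_indep_iff by auto
qed

theorem diadem_eq_corona_iff: "diadem V E = corona V E \<longleftrightarrow> crit_indep_number = alpha V E"
proof
  assume "crit_indep_number = alpha V E"
  then have "{S. max_critical_indep V E S} = {S. indep V E S \<and> card S = alpha V E}"
    using max_critical_indep_iff_maximum_indep koenig_egervary_iff_crit_indep_number by blast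
  then show "diadem V E = corona V E"
    unfolding diadem_def corona_def by simp
next
  assume eq: "diadem V E = corona V E"
  obtain S where S: "max_critical_indep V E S"
    using max_critical_indep_exists by blast
  then have indS: "indep V E S" and cardS: "card S = crit_indep_number"
    unfolding max_critical_indep_iff critical_indep_def by auto
  obtain m where m: "matching_into E m (nbhd E S) S"
    using critical_indep_matching_into S unfolding max_critical_indep_iff by blast
  obtain I where I: "indep V E I" "card I = alpha V E"
    using maximum_indep_exists by blast
  have "I \<subseteq> corona V E"
    using I unfolding corona_def by blast
  also have "\<dots> \<subseteq> S \<union> nbhd E S"
    using eq critical_indep_subset_closed_nbhd[OF S]
    unfolding diadem_def max_critical_indep_iff by blast
  finally have "alpha V E \<le> crit_indep_number"
    using card_indep_in_closed_nbhd_le[OF indS m I(1)] I(2) cardS by simp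
  then show "crit_indep_number = alpha V E"
    using crit_indep_number_le_alpha by simp
qed

end

theorem theorem1p6:
  fixes V :: "'a set" and E :: "'a \<Rightarrow> 'a \<Rightarrow> bool"
  assumes "simple_graph V E"
  shows "(koenig_egervary V E \<longleftrightarrow> diadem V E = corona V E)
       \<and> (diadem V E = corona V E \<longleftrightarrow> card (diadem V E) + card (nucleus V E) = 2 * alpha V E)"
proof -
  interpret fin_simple_graph V E
    using assms by unfold_locales
  show ?thesis
    using koenig_egervary_iff_crit_indep_number diadem_eq_corona_iff card_diadem_nucleus by auto
qed

end
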